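(* Let $n\ge1$, $k\ge1$. The operations $\gamma\mapsto\sigma_l\cdot\gamma$ ($l\in\{1,\dots,k-1\}$) on $\Sigma_n(k)$ extend (uniquely) to an action of $\mathfrak S_k$ on $\Sigma_n(k)$. Moreover, $P$ is equivariant for this action and the action of $\mathfrak S_k$ on sequences, and preserves stabilisers: for all $\gamma\in\Sigma_n(k)$ and $\pi\in\mathfrak S_k$, $\pi\cdot P(\gamma)=P(\gamma)$ if and only if $\pi\cdot\gamma=\gamma$.
   Context: Let $n\ge1$. $\mathfrak S_n$ is the symmetric group on $\{1,\dots,n\}$; products are composed right to left. $\mathsf T_n$ is the set of transpositions; a transposition is always written $(i\,j)$ with $i<j$. For $\sigma\in\mathfrak S_n$, $|\sigma|=n-(\text{number of cycles of }\sigma\text{, fixed points counted})$; $\sigma_1\preccurlyeq\sigma_2$ iff $|\sigma_2|=|\sigma_1|+|\sigma_1^{-1}\sigma_2|$. $\Sigma_n(k)=\{(\tau_1,\dots,\tau_k)\in(\mathsf T_n)^k : |\tau_1\cdots\tau_k|=k,\ \tau_1\cdots\tau_k\preccurlyeq(1\,2\,\dots\,n)\}$. $P:\Sigma_n(k)\to\{1,\dots,n-1\}^k$ sends $((i_1\,j_1),\dots,(i_k\,j_k))$ to $(i_1,\dots,i_k)$. The group $\mathfrak S_k$ acts on sequences by $\pi\cdot(x_1,\dots,x_k)=(x_{\pi^{-1}(1)},\dots,x_{\pi^{-1}(k)})$. Let $\sigma_l=(l\;l+1)\in\mathfrak S_k$ be the Coxeter generators. For $(g_1,\dots,g_k)\in(\mathsf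 T_n)^k$ define $\beta_l\cdot(g_1,\dots,g_k)=(g_1,\dots,g_{l-1},g_{l+1},g_{l+1}^{-1}g_lg_{l+1},g_{l+2},\dots,g_k)$ and $\beta_l^{-1}\cdot(g_1,\dots,g_k)=(g_1,\dots,g_{l-1},g_lg_{l+1}g_l^{-1},g_l,g_{l+2},\dots,g_k)$. For $\gamma=((i_1\,j_1),\dots,(i_k\,j_k))\in\Sigma_n(k)$ define $\sigma_l\cdot\gamma=\gamma$ if $i_l=i_{l+1}$, $\sigma_l\cdot\gamma=\beta_l\cdot\gamma$ if $i_l<i_{l+1}$, and $\sigma_l\cdot\gamma=\beta_l^{-1}\cdot\gamma$ if $i_l>i_{l+1}$ (this lies in $\Sigma_n(k)$). *)

theory Defs
  imports "HOL-Combinatorics.Combinatorics"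
begin

text \<open>Permutations of {1..n} are functions nat => nat (identity outside {1..n}).
  Composition is function composition (right to left).\<close>

definition transp_set :: "nat \<Rightarrow> (nat \<Rightarrow> nat) set" where
  "transp_set n = {transpose i j | i j. 1 \<le> i \<and> i < j \<and> j \<le> n}"

definition orbit_of :: "(nat \<Rightarrow> nat) \<Rightarrow> nat \<Rightarrow> nat set" where
  "orbit_of \<sigma> x = {y. \<exists>m. (\<sigma> ^^ m) x = y}"

definition ncycles :: "nat \<Rightarrow> (nat \<Rightarrow> nat) \<Rightarrow> nat" where
  "ncycles n \<sigma> = card (orbit_of \<sigma> ` {1..n})"

definition plen :: "nat \<Rightarrow> (nat \<Rightarrow> nat) \<Rightarrow> nat" where
  "plen n \<sigma> = n - ncycles n \<sigma>"

definition pleq :: "nat \<Rightarrow> (nat \<Rightarrow> nat) \<Rightarrow> (nat \<Rightarrow> nat) \<Rightarrow> bool" where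
  "pleq n \<sigma>1 \<sigma>2 \<longleftrightarrow> plen n \<sigma>2 = plen n \<sigma>1 + plen n (inv \<sigma>1 \<circ> \<sigma>2)"

definition long_cycle :: "nat \<Rightarrow> nat \<Rightarrow> nat" where
  "long_cycle n x = (if 1 \<le> x \<and> x < n then x + 1 else if x = n then 1 else x)"

definition lprod :: "(nat \<Rightarrow> nat) list \<Rightarrow> nat \<Rightarrow> nat" where
  "lprod gs = foldr (\<circ>) gs id"

definition Sigma_nk :: "nat \<Rightarrow> nat \<Rightarrow> (nat \<Rightarrow> nat) list set" where
  "Sigma_nk n k = {gs. length gs = k \<and> set gs \<subseteq> transp_set n \<and>
      plen n (lprod gs) = k \<and> pleq n (lprod gs) (long_cycle n)}"

definition tmin :: "(nat \<Rightarrow> nat) \<Rightarrow> nat" where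
  "tmin g = Min {x. g x \<noteq> x}"

definition Pmap :: "(nat \<Rightarrow> nat) list \<Rightarrow> nat list" where
  "Pmap gs = map tmin gs"

text \<open>Action of S_k on sequences (lists, positions 1..k stored at 0..k-1):
  pi.(x_1..x_k) = (x_{pi^-1(1)},...,x_{pi^-1(k)}).\<close>
definition seq_act :: "(nat \<Rightarrow> nat) \<Rightarrow> 'a list \<Rightarrow> 'a list" where
  "seq_act \<pi> xs = map (\<lambda>i. xs ! (inv \<pi> i - 1)) [1..<length xs + 1]"

text \<open>Hurwitz moves beta_l and beta_l^{-1} (l is 1-based).\<close>
definition beta :: "nat \<Rightarrow> (nat \<Rightarrow> nat) list \<Rightarrow> (nat \<Rightarrow> nat) list" where
  "beta l gs = gs[l - 1 := gs ! l, l := inv (gs ! l) \<circ> gs ! (l - 1) \<circ> gs ! l]"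

definition beta_inv :: "nat \<Rightarrow> (nat \<Rightarrow> nat) list \<Rightarrow> (nat \<Rightarrow> nat) list" where
  "beta_inv l gs = gs[l - 1 := gs ! (l - 1) \<circ> gs ! l \<circ> inv (gs ! (l - 1)), l := gs ! (l - 1)]"

definition sigma_op :: "nat \<Rightarrow> (nat \<Rightarrow> nat) list \<Rightarrow> (nat \<Rightarrow> nat) list" where
  "sigma_op l gs =
     (if tmin (gs ! (l - 1)) = tmin (gs ! l) then gs
      else if tmin (gs ! (l - 1)) < tmin (gs ! l) then beta l gs
      else beta_inv l gs)"

definition is_ext_action ::
  "nat \<Rightarrow> nat \<Rightarrow> ((nat \<Rightarrow> nat) \<Rightarrow> (nat \<Rightarrow> nat) list \<Rightarrow> (nat \<Rightarrow> nat) list) \<Rightarrow> bool" where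
  "is_ext_action n k act \<longleftrightarrow>
     (\<forall>\<pi> \<gamma>. \<pi> permutes {1..k} \<and> \<gamma> \<in> Sigma_nk n k \<longrightarrow> act \<pi> \<gamma> \<in> Sigma_nk n k) \<and>
     (\<forall>\<gamma> \<in> Sigma_nk n k. act id \<gamma> = \<gamma>) \<and>
     (\<forall>\<pi> \<rho> \<gamma>. \<pi> permutes {1..k} \<and> \<rho> permutes {1..k} \<and> \<gamma> \<in> Sigma_nk n k \<longrightarrow>
        act (\<pi> \<circ> \<rho>) \<gamma> = act \<pi> (act \<rho> \<gamma>)) \<and>
     (\<forall>l \<gamma>. 1 \<le> l \<and> l < k \<and> \<gamma> \<in> Sigma_nk n k \<longrightarrow>
        act (transpose l (l + 1)) \<gamma> = sigma_op l \<gamma>)"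

end

theory Submission
  imports Defs
begin

text \<open>
  We construct the action of \<open>S\<^sub>k\<close> on \<open>\<Sigma>\<^sub>n(k)\<close> from a rigidity property: an element
  \<open>\<gamma> \<in> \<Sigma>\<^sub>n(k)\<close> is determined by its product \<open>\<tau>\<^sub>1 \<cdots> \<tau>\<^sub>k\<close> and by the sequence \<open>P(\<gamma>)\<close>
  of the smaller points of its factors.  Granting this, \<open>\<pi> \<cdot> \<gamma>\<close> is defined as the unique
  element of \<open>\<Sigma>\<^sub>n(k)\<close> with the same product as \<open>\<gamma>\<close> and with \<open>P(\<pi> \<cdot> \<gamma>) = \<pi> \<cdot> P(\<gamma>)\<close>.
  It exists because each move \<open>\<sigma>\<^sub>l\<close> preserves the product and permutes \<open>P\<close> by \<open>(l l+1)\<close>,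
  and the adjacent transpositions generate \<open>S\<^sub>k\<close>; the action axioms, equivariance of
  \<open>P\<close>, uniqueness of the extension and the statement about stabilisers then all follow
  from rigidity.

  Multiplying by a transposition \<open>(a b)\<close> changes the number
  of cycles by one; a product below the long cycle has increasing cycles
  \<open>(c\<^sub>1 < \<dots> < c\<^sub>r)\<close>, and in a minimal factorisation of such a permutation the last factor
  \<open>(a b)\<close> cuts the cycle of \<open>a\<close> into \<open>C - {a<..b}\<close> and \<open>C \<inter> {a<..b}\<close>.  A counting
  (parking) condition relating each cycle to the smaller points of the factors then shows
  that \<open>b\<close> is determined by \<open>a\<close>, the product and the remaining smaller points.
\<close>

section \<open>Permutations, cycles and transpositions\<close>

lemma lprod_Nil [simp]: "lprod [] = id"
  by (simp add: lprod_def)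

lemma lprod_Cons [simp]: "lprod (g # gs) = g \<circ> lprod gs"
  by (simp add: lprod_def)

lemma lprod_snoc: "lprod (gs @ [g]) = lprod gs \<circ> g"
  by (induction gs) (auto simp: comp_assoc)

lemma transp_setE:
  assumes "g \<in> transp_set n"
  obtains i j where "g = transpose i j" "1 \<le> i" "i < j" "j \<le> n"
  using assms unfolding transp_set_def by blast

lemma transp_setI:
  assumes "a \<in> {1..n}" "b \<in> {1..n}" "a \<noteq> b"
  shows "transpose a b \<in> transp_set n"
proof (cases "a < b")
  case True
  then show ?thesis using assms unfolding transp_set_def by auto
next
  case False
  then have "b < a" using assms(3) by simp
  then have "transpose b a \<in> transp_set n" using assms unfolding transp_set_def by fastforce
  then show ?thesis by (simp add: transpose_commute)
qed

lemma tmin_transpose: "i < j \<Longrightarrow> tmin (transpose i j) = i"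
proof -
  assume "i < j"
  then have "{x. transpose i j x \<noteq> x} = {i, j}" by (auto simp: transpose_def)
  with \<open>i < j\<close> show ?thesis unfolding tmin_def by simp
qed

lemma transp_permutes: "g \<in> transp_set n \<Longrightarrow> g permutes {1..n}"
  by (erule transp_setE) (auto intro!: permutes_swap_id)

lemma transp_inv: "g \<in> transp_set n \<Longrightarrow> inv g = g"
  by (auto elim: transp_setE)

lemma transp_invol: "g \<in> transp_set n \<Longrightarrow> g \<circ> g = id"
  by (auto elim: transp_setE)

lemma lprod_permutes: "set gs \<subseteq> transp_set n \<Longrightarrow> lprod gs permutes {1..n}"
proof (induction gs)
  case (Cons g gs)
  then show ?case unfolding lprod_Cons by (intro permutes_compose[OF _ transp_permutes]) auto
qed (simp add: permutes_id)

lemma comp_transp_permutes: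
  "\<pi> permutes {1..n} \<Longrightarrow> t \<in> transp_set n \<Longrightarrow> (\<pi> \<circ> t) permutes {1..n}"
  by (rule permutes_compose[OF transp_permutes])

lemma transpose_conj:
  "transpose c d \<circ> transpose a b \<circ> transpose c d = transpose (transpose c d a) (transpose c d b)"
  by (auto simp: fun_eq_iff transpose_def)

lemma transp_conj:
  assumes "g \<in> transp_set n" "h \<in> transp_set n"
  shows "h \<circ> g \<circ> h \<in> transp_set n"
proof -
  obtain a b where g: "g = transpose a b" "1 \<le> a" "a < b" "b \<le> n"
    using assms(1) by (rule transp_setE)
  obtain c d where h: "h = transpose c d" "1 \<le> c" "c < d" "d \<le> n"
    using assms(2) by (rule transp_setE)
  have "h a \<in> {1..n}" "h b \<in> {1..n}" "h a \<noteq> h b"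
    using g h by (auto simp: transpose_def)
  then have "transpose (h a) (h b) \<in> transp_set n" by (rule transp_setI)
  then show ?thesis unfolding g(1) h(1) transpose_conj .
qed

lemma lprod_update_adjacent:
  "Suc i < length gs \<Longrightarrow> x \<circ> y = gs ! i \<circ> gs ! Suc i \<Longrightarrow>
   lprod (gs[i := x, Suc i := y]) = lprod gs"
proof (induction gs arbitrary: i)
  case (Cons g gs)
  show ?case
  proof (cases i)
    case 0
    then obtain h hs where gs: "gs = h # hs" using Cons.prems(1) by (cases gs) auto
    have "x \<circ> y = g \<circ> h" using Cons.prems(2) by (simp only: 0 gs nth_Cons_0 nth_Cons_Suc)
    then have "x \<circ> (y \<circ> lprod hs) = g \<circ> (h \<circ> lprod hs)" by (metis comp_assoc)
    then show ?thesis by (simp add: 0 gs)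
  qed (use Cons in \<open>simp add: comp_def\<close>)
qed simp

text \<open>The orbit in the sense of the definitions is the forward orbit; for permutations it
  coincides with the library notion, which gives symmetry and finiteness.\<close>

lemma orbit_of_self [simp]: "x \<in> orbit_of \<pi> x"
  unfolding orbit_of_def by (auto intro: exI[of _ 0])

lemma orbit_of_step: "y \<in> orbit_of \<pi> x \<Longrightarrow> \<pi> y \<in> orbit_of \<pi> x"
  unfolding orbit_of_def by (auto intro: exI[of _ "Suc m" for m])

lemma orbit_of_induct [consumes 1, case_names self step]:
  assumes "y \<in> orbit_of \<pi> x" "P x" "\<And>z. z \<in> orbit_of \<pi> x \<Longrightarrow> P z \<Longrightarrow> P (\<pi> z)"
  shows "P y"
proof -
  obtain m where m: "y = (\<pi> ^^ m) x" using assms(1) unfolding orbit_of_def by auto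
  have "(\<pi> ^^ m) x \<in> orbit_of \<pi> x \<and> P ((\<pi> ^^ m) x)"
    by (induction m) (use assms(2,3) orbit_of_step in auto)
  then show ?thesis using m by simp
qed

lemma orbit_of_trans:
  assumes "y \<in> orbit_of \<pi> x" "z \<in> orbit_of \<pi> y" shows "z \<in> orbit_of \<pi> x"
  using assms(2) by (induction rule: orbit_of_induct) (use assms(1) orbit_of_step in auto)

lemma orbit_of_perm: "permutation \<pi> \<Longrightarrow> orbit_of \<pi> x = orbit \<pi> x"
  using orbit_altdef_permutation[of \<pi> x] by (auto simp: orbit_of_def)

lemma orbit_of_sym:
  assumes "permutation \<pi>" "y \<in> orbit_of \<pi> x" shows "x \<in> orbit_of \<pi> y"
proof -
  have "y \<in> orbit \<pi> x" using assms orbit_of_perm by blast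
  with permutation_self_in_orbit[OF assms(1)] have "x \<in> orbit \<pi> y" by (rule orbit_swap)
  then show ?thesis using assms(1) orbit_of_perm by blast
qed

lemma orbit_of_eq: "permutation \<pi> \<Longrightarrow> y \<in> orbit_of \<pi> x \<Longrightarrow> orbit_of \<pi> y = orbit_of \<pi> x"
  using orbit_of_sym orbit_of_trans by blast

lemma orbit_of_finite: "permutation \<pi> \<Longrightarrow> finite (orbit_of \<pi> x)"
  using orbit_of_perm[of \<pi> x] finite_orbit[OF permutation_self_in_orbit] by simp

lemma orbit_of_fixed:
  assumes "\<pi> x = x" shows "orbit_of \<pi> x = {x}"
proof -
  have "y = x" if "y \<in> orbit_of \<pi> x" for y
    using that by (induction rule: orbit_of_induct) (use assms in auto)
  then show ?thesis by auto
qed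

lemma permutes_permutation: "(\<pi> :: nat \<Rightarrow> nat) permutes {1..n} \<Longrightarrow> permutation \<pi>"
  using permutes_imp_permutation[of "{1..n}" \<pi>] by simp

lemma orbit_of_avoid:
  assumes "a \<notin> orbit_of \<pi> x" "b \<notin> orbit_of \<pi> x"
  shows "orbit_of (\<pi> \<circ> transpose a b) x = orbit_of \<pi> x"
proof -
  have "((\<pi> \<circ> transpose a b) ^^ m) x = (\<pi> ^^ m) x \<and> (\<pi> ^^ m) x \<in> orbit_of \<pi> x" for m
  proof (induction m)
    case (Suc m)
    then have "transpose a b ((\<pi> ^^ m) x) = (\<pi> ^^ m) x" using assms by (metis transpose_apply_other)
    with Suc show ?case by (simp add: orbit_of_step)
  qed simp
  then show ?thesis unfolding orbit_of_def by metis
qed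

lemma ncycles_le: "ncycles n \<pi> \<le> n"
  unfolding ncycles_def using card_image_le[of "{1..n}" "orbit_of \<pi>"] by simp

lemma ncycles_id: "ncycles n id = n"
proof -
  have "orbit_of id = (\<lambda>x. {x})" by (rule ext) (rule orbit_of_fixed, simp)
  moreover have "inj_on (\<lambda>x::nat. {x}) {1..n}" by (rule inj_onI) simp
  ultimately show ?thesis unfolding ncycles_def by (simp add: card_image)
qed

text \<open>They are shared by
  \<open>\<pi>\<close> and \<open>\<pi> \<circ> (a b)\<close>, so only the (one or two) orbits through \<open>a\<close> and \<open>b\<close> can change.\<close>

definition far_orbits :: "nat \<Rightarrow> (nat \<Rightarrow> nat) \<Rightarrow> nat \<Rightarrow> nat \<Rightarrow> nat set set" where
  "far_orbits n \<pi> a b = {X \<in> orbit_of \<pi> ` {1..n}. a \<notin> X \<and> b \<notin> X}"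

lemma ncycles_far_orbits:
  assumes "permutation \<pi>" "a \<in> {1..n}" "b \<in> {1..n}"
  shows "ncycles n \<pi> = card (far_orbits n \<pi> a b) + card {orbit_of \<pi> a, orbit_of \<pi> b}"
proof -
  have "orbit_of \<pi> ` {1..n} = far_orbits n \<pi> a b \<union> {orbit_of \<pi> a, orbit_of \<pi> b}"
    using assms orbit_of_eq[OF assms(1)] unfolding far_orbits_def by blast
  then have "ncycles n \<pi> = card (far_orbits n \<pi> a b \<union> {orbit_of \<pi> a, orbit_of \<pi> b})"
    unfolding ncycles_def by simp
  also have "\<dots> = card (far_orbits n \<pi> a b) + card {orbit_of \<pi> a, orbit_of \<pi> b}"
    by (rule card_Un_disjoint) (auto simp: far_orbits_def)
  finally show ?thesis .
qed

lemma far_orbits_subset: "far_orbits n \<pi> a b \<subseteq> far_orbits n (\<pi> \<circ> transpose a b) a b"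
  unfolding far_orbits_def using orbit_of_avoid by (fastforce intro!: image_eqI)

lemma far_orbits_transpose: "far_orbits n (\<pi> \<circ> transpose a b) a b = far_orbits n \<pi> a b"
proof
  have "\<pi> \<circ> transpose a b \<circ> transpose a b = \<pi>" by (simp add: comp_assoc)
  then show "far_orbits n (\<pi> \<circ> transpose a b) a b \<subseteq> far_orbits n \<pi> a b"
    using far_orbits_subset[of n "\<pi> \<circ> transpose a b" a b] by simp
qed (rule far_orbits_subset)

lemma transpose_permutes_comp:
  "\<pi> permutes {1..n} \<Longrightarrow> a \<in> {1..n} \<Longrightarrow> b \<in> {1..n} \<Longrightarrow> (\<pi> \<circ> transpose a b) permutes {1..n}"
  by (rule permutes_compose[OF permutes_swap_id])

lemma ncycles_transpose_bounds:
  assumes p: "\<pi> permutes {1..n}" and ab: "a \<in> {1..n}" "b \<in> {1..n}"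
  shows "ncycles n (\<pi> \<circ> transpose a b) \<le> ncycles n \<pi> + 1"
    and "ncycles n \<pi> \<le> ncycles n (\<pi> \<circ> transpose a b) + 1"
proof -
  have p': "permutation (\<pi> \<circ> transpose a b)"
    using transpose_permutes_comp[OF p ab] by (rule permutes_permutation)
  have pair: "1 \<le> card {X, Y} \<and> card {X, Y} \<le> 2" for X Y :: "nat set"
    by (cases "X = Y") auto
  note counts = ncycles_far_orbits[OF permutes_permutation[OF p] ab]
      ncycles_far_orbits[OF p' ab, unfolded far_orbits_transpose]
      pair[of "orbit_of \<pi> a" "orbit_of \<pi> b"]
      pair[of "orbit_of (\<pi> \<circ> transpose a b) a" "orbit_of (\<pi> \<circ> transpose a b) b"]
  show "ncycles n (\<pi> \<circ> transpose a b) \<le> ncycles n \<pi> + 1" using counts by linarith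
  show "ncycles n \<pi> \<le> ncycles n (\<pi> \<circ> transpose a b) + 1" using counts by linarith
qed

lemma transpose_joins_orbits:
  assumes p: "permutation \<pi>" and nb: "b \<notin> orbit_of \<pi> a"
  shows "b \<in> orbit_of (\<pi> \<circ> transpose a b) a"
proof -
  define \<pi>' where "\<pi>' = \<pi> \<circ> transpose a b"
  have "a \<noteq> b" using nb by auto
  then have \<pi>'a: "\<pi> b = \<pi>' a" unfolding \<pi>'_def by simp
  then have \<pi>b: "\<pi> b \<in> orbit_of \<pi>' a" using orbit_of_step[OF orbit_of_self] by metis
  have "z \<in> orbit_of \<pi>' a" if "z \<in> orbit_of \<pi> (\<pi> b)" for z
    using that
  proof (induction rule: orbit_of_induct)
    case (step z)
    then have "z \<in> orbit_of \<pi> b" by (meson orbit_of_self orbit_of_step orbit_of_trans)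
    then have "z \<noteq> a" using nb orbit_of_sym[OF p] by blast
    then have "\<pi> z = \<pi>' z \<or> \<pi> z = \<pi> b" unfolding \<pi>'_def by (cases "z = b") auto
    then show ?case using orbit_of_step[OF step.IH] \<pi>b by auto
  qed (rule \<pi>b)
  moreover have "b \<in> orbit_of \<pi> (\<pi> b)" by (rule orbit_of_sym[OF p orbit_of_step[OF orbit_of_self]])
  ultimately show ?thesis unfolding \<pi>'_def by blast
qed

lemma ncycles_merge:
  assumes p: "\<pi> permutes {1..n}" and ab: "a \<in> {1..n}" "b \<in> {1..n}"
    and nb: "b \<notin> orbit_of \<pi> a"
  shows "ncycles n (\<pi> \<circ> transpose a b) + 1 = ncycles n \<pi>"
proof -
  let ?\<pi>' = "\<pi> \<circ> transpose a b"
  have pp: "permutation \<pi>" by (rule permutes_permutation[OF p])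
  have pp': "permutation ?\<pi>'" by (rule permutes_permutation[OF transpose_permutes_comp[OF p ab]])
  have "orbit_of \<pi> a \<noteq> orbit_of \<pi> b" using nb by auto
  moreover have "orbit_of ?\<pi>' b = orbit_of ?\<pi>' a"
    by (rule orbit_of_eq[OF pp' transpose_joins_orbits[OF pp nb]])
  ultimately show ?thesis
    using ncycles_far_orbits[OF pp ab] ncycles_far_orbits[OF pp' ab]
      far_orbits_transpose[of n \<pi> a b]
    by simp
qed

lemma ncycles_cut:
  assumes p: "\<pi> permutes {1..n}" and x: "x \<in> {1..n}" and nx: "\<pi> x \<noteq> x"
  shows "ncycles n (\<pi> \<circ> transpose x (\<pi> x)) = ncycles n \<pi> + 1"
proof -
  let ?\<pi>' = "\<pi> \<circ> transpose x (\<pi> x)"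
  have px: "\<pi> x \<in> {1..n}" using permutes_in_image[OF p] x by simp
  have pp: "permutation \<pi>" by (rule permutes_permutation[OF p])
  have pp': "permutation ?\<pi>'" by (rule permutes_permutation[OF transpose_permutes_comp[OF p x px]])
  have "orbit_of \<pi> (\<pi> x) = orbit_of \<pi> x"
    by (rule orbit_of_eq[OF pp orbit_of_step[OF orbit_of_self]])
  moreover have "orbit_of ?\<pi>' (\<pi> x) = {\<pi> x}" by (rule orbit_of_fixed) simp
  moreover have "orbit_of ?\<pi>' x \<noteq> {\<pi> x}" using orbit_of_self[of x ?\<pi>'] nx by (metis singletonD)
  ultimately show ?thesis
    using ncycles_far_orbits[OF pp x px] ncycles_far_orbits[OF pp' x px]
      far_orbits_transpose[of n \<pi> x "\<pi> x"] by (simp add: card_insert_if)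
qed

section \<open>Rigidity of the elements of \<open>\<Sigma>\<^sub>n(k)\<close>\<close>

definition cyc_next :: "nat set \<Rightarrow> nat \<Rightarrow> nat" where
  "cyc_next S x = (if \<exists>y\<in>S. x < y then Min {y\<in>S. x < y} else Min S)"

text \<open>A permutation has increasing cycles if it sends every point to its cyclic successor
  within its own orbit, i.e. every cycle has the form \<open>(c\<^sub>1 c\<^sub>2 \<dots> c\<^sub>r)\<close> with
  \<open>c\<^sub>1 < c\<^sub>2 < \<dots> < c\<^sub>r\<close>.  The long cycle is of this kind, and so is every
  permutation below it; this is what makes factorisations in \<open>\<Sigma>\<^sub>n(k)\<close> rigid.\<close>

definition incr_cycles :: "(nat \<Rightarrow> nat) \<Rightarrow> bool" where
  "incr_cycles \<pi> \<longleftrightarrow> (\<forall>x. \<pi> x = cyc_next (orbit_of \<pi> x) x)"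

lemma cyc_next_eqI:
  assumes "finite S" "z \<in> S" "x < z" "\<forall>w\<in>S. x < w \<longrightarrow> z \<le> w"
  shows "cyc_next S x = z"
proof -
  have "Min {y\<in>S. x < y} = z" using assms by (intro Min_eqI) auto
  then show ?thesis using assms unfolding cyc_next_def by auto
qed

lemma cyc_next_wrap: "\<forall>w\<in>S. w \<le> x \<Longrightarrow> cyc_next S x = Min S"
  unfolding cyc_next_def by (auto simp: not_less)

lemma cyc_next_cases:
  assumes "finite S"
  obtains "cyc_next S x \<in> S" "x < cyc_next S x" "\<forall>w\<in>S. x < w \<longrightarrow> cyc_next S x \<le> w"
    | "\<forall>w\<in>S. w \<le> x" "cyc_next S x = Min S"
proof (cases "\<exists>y\<in>S. x < y")
  case True
  let ?T = "{y\<in>S. x < y}"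
  have T: "finite ?T" "?T \<noteq> {}" using assms True by auto
  have "cyc_next S x = Min ?T" using True unfolding cyc_next_def by simp
  then show ?thesis using that(1) Min_in[OF T] Min_le[OF T(1)] by auto
next
  case False
  then have "\<forall>w\<in>S. w \<le> x" by (auto simp: not_less)
  then show ?thesis using that(2) cyc_next_wrap by blast
qed

lemma cyc_next_in:
  assumes "finite S" "S \<noteq> {}" shows "cyc_next S x \<in> S"
  using assms(1)
proof (cases rule: cyc_next_cases[of S x])
  case 2
  then show ?thesis using Min_in assms by simp
qed

lemma cyc_next_subset:
  assumes "finite S" "T \<subseteq> S" "cyc_next S x \<in> T" "x < cyc_next S x"
  shows "cyc_next T x = cyc_next S x"
  using assms(1)
proof (cases rule: cyc_next_cases[of S x])
  case 1
  then show ?thesis using assms by (intro cyc_next_eqI) (auto intro: finite_subset)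
next
  case 2
  have "Min S \<in> S" using assms by (intro Min_in) auto
  then have "Min S \<le> x" using 2(1) by blast
  then show ?thesis using 2(2) assms(4) by simp
qed

lemma cyc_next_reach:
  assumes fin: "finite S" and u: "u \<in> S" and f: "\<forall>y\<in>S. f y = cyc_next S y"
  shows "y \<in> S \<Longrightarrow> u \<le> y \<Longrightarrow> y \<in> orbit_of f u"
proof (induction y rule: less_induct)
  case (less y)
  show ?case
  proof (cases "y = u")
    case False
    let ?z = "Max {w\<in>S. w < y}"
    have T: "finite {w\<in>S. w < y}" "u \<in> {w\<in>S. w < y}" using fin u False less.prems by auto
    then have "?z \<in> {w\<in>S. w < y}" by (intro Max_in) auto
    then have z: "?z \<in> S" "?z < y" "u \<le> ?z" using Max_ge[OF T] by auto
    have "y \<le> w" if "w \<in> S" "?z < w" for w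
    proof (rule ccontr)
      assume "\<not> y \<le> w"
      then have "w \<le> ?z" using that(1) Max_ge[OF T(1)] by simp
      then show False using that(2) by simp
    qed
    then have "\<forall>w\<in>S. ?z < w \<longrightarrow> y \<le> w" by blast
    then have "cyc_next S ?z = y" by (rule cyc_next_eqI[OF fin less.prems(1) z(2)])
    then have "f ?z = y" using f z(1) by simp
    then show ?thesis using orbit_of_step[OF less.IH[OF z(2,1,3)]] by simp
  qed simp
qed

lemma cyc_next_orbit:
  assumes fin: "finite S" and x: "x \<in> S" and f: "\<forall>y\<in>S. f y = cyc_next S y"
  shows "orbit_of f x = S"
proof
  show "orbit_of f x \<subseteq> S"
  proof
    fix y assume "y \<in> orbit_of f x"
    then show "y \<in> S" by (induction rule: orbit_of_induct) (use x f cyc_next_in[OF fin] in auto)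
  qed
  have M: "Max S \<in> S" "Min S \<in> S" using Max_in[OF fin] Min_in[OF fin] x by auto
  have "f (Max S) = Min S" using f M cyc_next_wrap[of S "Max S"] fin by simp
  then have min: "Min S \<in> orbit_of f x"
    using orbit_of_step[OF cyc_next_reach[OF fin x f M(1)]] x fin by simp
  show "S \<subseteq> orbit_of f x"
  proof
    fix y assume y: "y \<in> S"
    show "y \<in> orbit_of f x"
    proof (cases "x \<le> y")
      case False
      have "y \<in> orbit_of f (Min S)" using cyc_next_reach[OF fin M(2) f y] fin y by simp
      then show ?thesis using min orbit_of_trans by blast
    qed (rule cyc_next_reach[OF fin x f y])
  qed
qed

lemma incr_cycles_on_orbit:
  assumes "permutation \<pi>" "incr_cycles \<pi>" "y \<in> orbit_of \<pi> a"
  shows "\<pi> y = cyc_next (orbit_of \<pi> a) y"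
  using assms orbit_of_eq unfolding incr_cycles_def by metis

text \<open>Cutting an increasing cycle \<open>C\<close> at \<open>a < b\<close> splits it into the increasing cycles on
  \<open>C - {a<..b}\<close> and on \<open>C \<inter> {a<..b}\<close>: in both parts the new successor of \<open>y\<close> is the old
  successor of \<open>(a b) y\<close>.\<close>

lemma cyc_next_cut_outer:
  assumes fin: "finite C" and ab: "a \<in> C" "b \<in> C" "a < b" and y: "y \<in> C - {a<..b}"
  shows "cyc_next (C - {a<..b}) y = cyc_next C (transpose a b y)"
proof -
  let ?C1 = "C - {a<..b}" and ?z = "if y = a then b else y"
  have z: "transpose a b y = ?z" using y ab by (auto simp: transpose_def)
  have fin1: "finite ?C1" using fin by simp
  have "cyc_next ?C1 y = cyc_next C ?z"
    using fin
  proof (cases rule: cyc_next_cases[of C ?z])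
    case 1
    then show ?thesis using y ab by (intro cyc_next_eqI[OF fin1]) (auto split: if_splits)
  next
    case 2
    have "Min C \<in> C" using fin ab(1) by (intro Min_in) auto
    moreover have "Min C \<le> a" using Min_le[OF fin ab(1)] .
    ultimately have "Min ?C1 = Min C" using fin fin1 by (intro Min_eqI) auto
    moreover have "\<forall>w\<in>?C1. w \<le> y" using 2(1) y by (auto split: if_splits)
    ultimately show ?thesis using 2(2) cyc_next_wrap by simp
  qed
  then show ?thesis using z by simp
qed

lemma cyc_next_cut_inner:
  assumes fin: "finite C" and ab: "a \<in> C" "b \<in> C" "a < b" and y: "y \<in> C \<inter> {a<..b}"
  shows "cyc_next (C \<inter> {a<..b}) y = cyc_next C (transpose a b y)"
proof -
  let ?C2 = "C \<inter> {a<..b}" and ?z = "if y = b then a else y"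
  have z: "transpose a b y = ?z" using y by auto
  have fin2: "finite ?C2" using fin by simp
  have "cyc_next ?C2 y = cyc_next C ?z"
    using fin
  proof (cases rule: cyc_next_cases[of C ?z])
    case 1
    show ?thesis
    proof (cases "y = b")
      case True
      have "cyc_next ?C2 y = Min ?C2" using True by (intro cyc_next_wrap) auto
      also have "\<dots> = cyc_next C ?z" using 1 True ab fin2 by (intro Min_eqI) auto
      finally show ?thesis .
    next
      case False
      then have zy: "?z = y" by simp
      have "y < b" using False y by simp
      then have "cyc_next C y \<le> b" using 1(3) ab(2) zy by simp
      then show ?thesis unfolding zy using 1 zy y by (intro cyc_next_subset[OF fin]) auto
    qed
  next
    case 2
    then show ?thesis using y ab by (auto split: if_splits)
  qed
  then show ?thesis using z by simp
qed

lemma cut_cycle_parts: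
  assumes p: "permutation \<pi>" and inc: "incr_cycles \<pi>" and ab: "a < b"
    and b: "b \<in> orbit_of \<pi> a"
    and D: "D = orbit_of \<pi> a - {a<..b} \<or> D = orbit_of \<pi> a \<inter> {a<..b}" and y: "y \<in> D"
  shows "(\<pi> \<circ> transpose a b) y = cyc_next D y" and "orbit_of (\<pi> \<circ> transpose a b) y = D"
proof -
  define C where "C = orbit_of \<pi> a"
  have fin: "finite C" unfolding C_def by (rule orbit_of_finite[OF p])
  have abC: "a \<in> C" "b \<in> C" "a < b" using b ab unfolding C_def by auto
  have succ: "(\<pi> \<circ> transpose a b) z = cyc_next C (transpose a b z)" if "z \<in> C" for z
  proof -
    have "transpose a b z \<in> C" using that abC by (auto simp: transpose_def)
    then show ?thesis unfolding C_def using incr_cycles_on_orbit[OF p inc] by simp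
  qed
  have step: "\<forall>z\<in>D. (\<pi> \<circ> transpose a b) z = cyc_next D z"
    using D succ cyc_next_cut_outer[OF fin abC] cyc_next_cut_inner[OF fin abC]
    unfolding C_def[symmetric] by auto
  then show "(\<pi> \<circ> transpose a b) y = cyc_next D y" using y by blast
  have "finite D" using D fin unfolding C_def[symmetric] by auto
  then show "orbit_of (\<pi> \<circ> transpose a b) y = D" by (rule cyc_next_orbit[OF _ y step])
qed

lemma incr_cycles_cut:
  assumes p: "permutation \<pi>" and inc: "incr_cycles \<pi>" and ab: "a < b"
    and b: "b \<in> orbit_of \<pi> a"
  shows "incr_cycles (\<pi> \<circ> transpose a b)"
    and "orbit_of (\<pi> \<circ> transpose a b) a = orbit_of \<pi> a - {a<..b}"
    and "orbit_of (\<pi> \<circ> transpose a b) b = orbit_of \<pi> a \<inter> {a<..b}"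
    and "y \<notin> orbit_of \<pi> a \<Longrightarrow> orbit_of (\<pi> \<circ> transpose a b) y = orbit_of \<pi> y"
proof -
  define C where "C = orbit_of \<pi> a"
  note parts = cut_cycle_parts[OF p inc ab b, folded C_def]
  have abC: "a \<in> C" "b \<in> C" using b unfolding C_def by auto
  show "orbit_of (\<pi> \<circ> transpose a b) a = orbit_of \<pi> a - {a<..b}"
    and "orbit_of (\<pi> \<circ> transpose a b) b = orbit_of \<pi> a \<inter> {a<..b}"
    using parts(2)[of "C - {a<..b}" a] parts(2)[of "C \<inter> {a<..b}" b] abC ab unfolding C_def by auto
  have outside: "orbit_of (\<pi> \<circ> transpose a b) y = orbit_of \<pi> y" if "y \<notin> C" for y
  proof -
    have "c \<notin> orbit_of \<pi> y" if "c \<in> C" for c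
      using \<open>y \<notin> C\<close> that orbit_of_eq[OF p] orbit_of_sym[OF p] unfolding C_def by metis
    then show ?thesis using abC by (intro orbit_of_avoid) auto
  qed
  then show "y \<notin> orbit_of \<pi> a \<Longrightarrow> orbit_of (\<pi> \<circ> transpose a b) y = orbit_of \<pi> y"
    unfolding C_def by blast
  have "(\<pi> \<circ> transpose a b) y = cyc_next (orbit_of (\<pi> \<circ> transpose a b) y) y" for y
  proof (cases "y \<in> C")
    case True
    then obtain D where "D = C - {a<..b} \<or> D = C \<inter> {a<..b}" "y \<in> D" by blast
    then show ?thesis using parts[of D y] by simp
  next
    case False
    then have "y \<noteq> a" "y \<noteq> b" using abC by auto
    then show ?thesis using inc outside[OF False] unfolding incr_cycles_def by simp
  qed
  then show "incr_cycles (\<pi> \<circ> transpose a b)" unfolding incr_cycles_def by blast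
qed

lemma long_cycle_cyc_next: "y \<in> {1..n} \<Longrightarrow> long_cycle n y = cyc_next {1..n} y"
proof (cases "y < n")
  case True
  moreover assume "y \<in> {1..n}"
  ultimately show ?thesis unfolding long_cycle_def by (subst cyc_next_eqI[of _ "y + 1"]) auto
next
  case False
  moreover assume y: "y \<in> {1..n}"
  ultimately have "y = n" by simp
  moreover have "Min {1..n} = 1" using y by (intro Min_eqI) auto
  ultimately show ?thesis using y unfolding long_cycle_def by (simp add: cyc_next_wrap)
qed

lemma long_cycle_orbit: "x \<in> {1..n} \<Longrightarrow> orbit_of (long_cycle n) x = {1..n}"
  by (rule cyc_next_orbit) (auto simp: long_cycle_cyc_next)

lemma long_cycle_incr_cycles:
  assumes "1 \<le> n" shows "incr_cycles (long_cycle n)"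
  unfolding incr_cycles_def
proof
  fix x
  show "long_cycle n x = cyc_next (orbit_of (long_cycle n) x) x"
  proof (cases "x \<in> {1..n}")
    case False
    then have "long_cycle n x = x" using assms unfolding long_cycle_def by auto
    moreover from this have "orbit_of (long_cycle n) x = {x}" by (rule orbit_of_fixed)
    ultimately show ?thesis by (simp add: cyc_next_wrap)
  qed (simp add: long_cycle_orbit long_cycle_cyc_next)
qed

lemma long_cycle_ncycles: "1 \<le> n \<Longrightarrow> ncycles n (long_cycle n) = 1"
proof -
  assume "1 \<le> n"
  then have "orbit_of (long_cycle n) ` {1..n} = {{1..n}}" using long_cycle_orbit by auto
  then show ?thesis unfolding ncycles_def by simp
qed

lemma long_cycle_permutes: "1 \<le> n \<Longrightarrow> long_cycle n permutes {1..n}"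
proof (rule inj_imp_permutes)
  show "inj_on (long_cycle n) {1..n}"
    by (rule inj_onI) (auto simp: long_cycle_def split: if_splits)
qed (auto simp: long_cycle_def)

lemma ncycles_lprod_lower: "set ts \<subseteq> transp_set n \<Longrightarrow> n \<le> ncycles n (lprod ts) + length ts"
proof (induction ts rule: rev_induct)
  case Nil
  then show ?case using ncycles_id[of n] by (simp add: id_def)
next
  case (snoc t ts)
  then obtain i j where t: "t = transpose i j" "1 \<le> i" "i < j" "j \<le> n"
    by (auto elim: transp_setE)
  have "ncycles n (lprod ts) \<le> ncycles n (lprod ts \<circ> t) + 1"
    unfolding t(1) using snoc.prems t by (intro ncycles_transpose_bounds(2) lprod_permutes) auto
  moreover have "n \<le> ncycles n (lprod ts) + length ts" using snoc by simp
  ultimately show ?case unfolding lprod_snoc length_append_singleton by linarith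
qed

lemma ncycles_comp_lprod_upper:
  "\<pi> permutes {1..n} \<Longrightarrow> set us \<subseteq> transp_set n \<Longrightarrow>
   ncycles n (\<pi> \<circ> lprod us) \<le> ncycles n \<pi> + length us"
proof (induction us arbitrary: \<pi>)
  case (Cons t us)
  then obtain i j where t: "t = transpose i j" "1 \<le> i" "i < j" "j \<le> n"
    by (auto elim: transp_setE)
  have split: "\<pi> \<circ> lprod (t # us) = \<pi> \<circ> t \<circ> lprod us" by (simp add: comp_assoc)
  have "ncycles n (\<pi> \<circ> t \<circ> lprod us) \<le> ncycles n (\<pi> \<circ> t) + length us"
    using Cons by (intro Cons.IH comp_transp_permutes) auto
  moreover have "ncycles n (\<pi> \<circ> t) \<le> ncycles n \<pi> + 1"
    unfolding t(1) using Cons.prems t by (intro ncycles_transpose_bounds(1)) auto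
  ultimately show ?case unfolding split length_Cons by linarith
qed simp

text \<open>If multiplying by \<open>m\<close> transpositions adds exactly \<open>m\<close> cycles, each of them cuts a
  cycle, so increasing cycles are preserved.\<close>

lemma incr_cycles_chain:
  "\<pi> permutes {1..n} \<Longrightarrow> incr_cycles \<pi> \<Longrightarrow> set us \<subseteq> transp_set n \<Longrightarrow>
   ncycles n (\<pi> \<circ> lprod us) = ncycles n \<pi> + length us \<Longrightarrow> incr_cycles (\<pi> \<circ> lprod us)"
proof (induction us arbitrary: \<pi>)
  case (Cons t us)
  then have t: "t \<in> transp_set n" and us: "set us \<subseteq> transp_set n" by auto
  then obtain i j where ij: "t = transpose i j" "1 \<le> i" "i < j" "j \<le> n" by (auto elim: transp_setE)
  have pt: "(\<pi> \<circ> t) permutes {1..n}" by (rule comp_transp_permutes[OF Cons.prems(1) t])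
  have split: "\<pi> \<circ> lprod (t # us) = \<pi> \<circ> t \<circ> lprod us" by (simp add: comp_assoc)
  have "ncycles n (\<pi> \<circ> t \<circ> lprod us) \<le> ncycles n (\<pi> \<circ> t) + length us"
    by (rule ncycles_comp_lprod_upper[OF pt us])
  moreover have "ncycles n (\<pi> \<circ> t) \<le> ncycles n \<pi> + 1"
    unfolding ij(1) using ij by (intro ncycles_transpose_bounds(1)[OF Cons.prems(1)]) auto
  moreover have "ncycles n (\<pi> \<circ> t \<circ> lprod us) = ncycles n \<pi> + 1 + length us"
    using Cons.prems(4) unfolding split length_Cons by linarith
  ultimately have cut: "ncycles n (\<pi> \<circ> t) = ncycles n \<pi> + 1"
    and rest: "ncycles n (\<pi> \<circ> t \<circ> lprod us) = ncycles n (\<pi> \<circ> t) + length us"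
    by linarith+
  have "j \<in> orbit_of \<pi> i"
  proof (rule ccontr)
    assume "j \<notin> orbit_of \<pi> i"
    then have "ncycles n (\<pi> \<circ> t) + 1 = ncycles n \<pi>"
      unfolding ij(1) using ij by (intro ncycles_merge[OF Cons.prems(1)]) auto
    then show False using cut by simp
  qed
  then have "incr_cycles (\<pi> \<circ> t)" unfolding ij(1)
    using incr_cycles_cut(1)[OF permutes_permutation[OF Cons.prems(1)] Cons.prems(2) ij(3)] by blast
  then have "incr_cycles (\<pi> \<circ> t \<circ> lprod us)" by (rule Cons.IH[OF pt _ us rest])
  then show ?case unfolding split .
qed simp

lemma transposition_factorisation:
  assumes "\<pi> permutes {1..n}"
  shows "\<exists>ts. set ts \<subseteq> transp_set n \<and> length ts = n - ncycles n \<pi> \<and> lprod ts = \<pi>"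
  using assms
proof (induction "n - ncycles n \<pi>" arbitrary: \<pi> rule: less_induct)
  case less
  show ?case
  proof (cases "\<pi> = id")
    case True
    then show ?thesis using ncycles_id[of n] by (intro exI[of _ "[]"]) simp
  next
    case False
    then obtain x where nx: "\<pi> x \<noteq> x" by (metis eq_id_iff)
    then have x: "x \<in> {1..n}" using less.prems by (meson permutes_not_in)
    have px: "\<pi> x \<in> {1..n}" using permutes_in_image[OF less.prems] x by simp
    define t where "t = transpose x (\<pi> x)"
    have t: "t \<in> transp_set n" unfolding t_def using x px nx by (intro transp_setI) auto
    have pt: "(\<pi> \<circ> t) permutes {1..n}" by (rule comp_transp_permutes[OF less.prems t])
    have cut: "ncycles n (\<pi> \<circ> t) = ncycles n \<pi> + 1"
      unfolding t_def by (rule ncycles_cut[OF less.prems x nx])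
    then have "n - ncycles n (\<pi> \<circ> t) < n - ncycles n \<pi>" using ncycles_le[of n "\<pi> \<circ> t"] by linarith
    then obtain ts where ts: "set ts \<subseteq> transp_set n" "length ts = n - ncycles n (\<pi> \<circ> t)"
      "lprod ts = \<pi> \<circ> t" using less.hyps[OF _ pt] by blast
    have "lprod (ts @ [t]) = \<pi>" using ts(3) transp_invol[OF t] by (simp add: lprod_snoc comp_assoc)
    moreover have "length (ts @ [t]) = n - ncycles n \<pi>" using ts(2) cut ncycles_le[of n "\<pi> \<circ> t"]
      by simp
    ultimately show ?thesis using ts(1) t by (intro exI[of _ "ts @ [t]"]) auto
  qed
qed

lemma inv_lprod: "set ts \<subseteq> transp_set n \<Longrightarrow> inv (lprod ts) = lprod (rev ts)"
proof (induction ts)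
  case (Cons t ts)
  have "bij t" using transp_permutes[of t n] Cons.prems permutes_bij by auto
  moreover have "bij (lprod ts)" using lprod_permutes[of ts n] Cons.prems permutes_bij by auto
  ultimately have "inv (lprod (t # ts)) = inv (lprod ts) \<circ> inv t"
    unfolding lprod_Cons by (rule o_inv_distrib)
  also have "\<dots> = lprod (rev (t # ts))" using Cons transp_inv[of t n] by (simp add: lprod_snoc)
  finally show ?case .
qed simp

lemma Sigma_nk_facts:
  assumes "\<gamma> \<in> Sigma_nk n k"
  shows "set \<gamma> \<subseteq> transp_set n" "length \<gamma> = k" "ncycles n (lprod \<gamma>) + k = n"
  using assms ncycles_le[of n "lprod \<gamma>"] unfolding Sigma_nk_def plen_def by auto

text \<open>Every element of \<open>\<Sigma>\<^sub>n(k)\<close> has a product with increasing cycles: it lies below the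
  long cycle, so it is obtained from the long cycle by cutting cycles only.\<close>

lemma Sigma_nk_incr_cycles:
  assumes n: "1 \<le> n" and g: "\<gamma> \<in> Sigma_nk n k"
  shows "incr_cycles (lprod \<gamma>)"
proof -
  define \<sigma> where "\<sigma> = lprod \<gamma>"
  define c where "c = long_cycle n"
  define \<rho> where "\<rho> = inv \<sigma> \<circ> c"
  have ps: "\<sigma> permutes {1..n}" unfolding \<sigma>_def using g
    by (intro lprod_permutes) (simp add: Sigma_nk_def)
  have pc: "c permutes {1..n}" unfolding c_def by (rule long_cycle_permutes[OF n])
  have pr: "\<rho> permutes {1..n}" unfolding \<rho>_def by (rule permutes_compose[OF pc permutes_inv[OF ps]])
  obtain ts where ts: "set ts \<subseteq> transp_set n" "length ts = n - ncycles n \<rho>" "lprod ts = \<rho>"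
    using transposition_factorisation[OF pr] by blast
  have "\<sigma> \<circ> \<rho> = c" unfolding \<rho>_def
    by (simp only: comp_assoc[symmetric] permutes_inv_o(1)[OF ps] id_comp)
  then have "c \<circ> inv \<rho> = \<sigma> \<circ> (\<rho> \<circ> inv \<rho>)" by (simp only: comp_assoc[symmetric])
  then have "\<sigma> = c \<circ> inv \<rho>" unfolding permutes_inv_o(1)[OF pr] comp_id by simp
  then have \<sigma>: "\<sigma> = c \<circ> lprod (rev ts)" using inv_lprod[OF ts(1)] ts(3) by simp
  have "plen n c = plen n \<sigma> + plen n \<rho>" using g unfolding Sigma_nk_def pleq_def \<rho>_def \<sigma>_def c_def
    by simp
  then have "ncycles n \<sigma> = ncycles n c + length (rev ts)"
    using long_cycle_ncycles[OF n] ts(2) ncycles_le[of n \<sigma>] ncycles_le[of n \<rho>] n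
    unfolding plen_def c_def by simp
  then show ?thesis
    using incr_cycles_chain[OF pc long_cycle_incr_cycles[OF n, folded c_def]] ts(1) \<sigma>
    unfolding \<sigma>_def by simp
qed

lemma minimal_last_factor:
  assumes ts: "set ts \<subseteq> transp_set n" and ab: "1 \<le> a" "a < b" "b \<le> n"
    and \<sigma>: "\<sigma> = lprod ts \<circ> transpose a b"
    and inc: "incr_cycles \<sigma>" and min: "ncycles n \<sigma> + (length ts + 1) = n"
  shows "b \<in> orbit_of \<sigma> a" "incr_cycles (lprod ts)" "ncycles n (lprod ts) + length ts = n"
    "orbit_of (lprod ts) a = orbit_of \<sigma> a - {a<..b}"
    "orbit_of (lprod ts) b = orbit_of \<sigma> a \<inter> {a<..b}"
    "y \<notin> orbit_of \<sigma> a \<Longrightarrow> orbit_of (lprod ts) y = orbit_of \<sigma> y"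
proof -
  have ps: "\<sigma> permutes {1..n}"
    unfolding \<sigma> using ab by (intro comp_transp_permutes lprod_permutes ts transp_setI) auto
  have ts_eq: "lprod ts = \<sigma> \<circ> transpose a b" unfolding \<sigma> by (simp add: comp_assoc)
  have lower: "n \<le> ncycles n (\<sigma> \<circ> transpose a b) + length ts"
    using ncycles_lprod_lower[OF ts] unfolding ts_eq .
  have abn: "a \<in> {1..n}" "b \<in> {1..n}" using ab by auto
  show b: "b \<in> orbit_of \<sigma> a"
  proof (rule ccontr)
    assume "b \<notin> orbit_of \<sigma> a"
    from ncycles_merge[OF ps abn this] show False using lower min by linarith
  qed
  show "ncycles n (lprod ts) + length ts = n"
    using lower min ncycles_transpose_bounds(1)[OF ps abn] unfolding ts_eq by linarith
  note cut = incr_cycles_cut[OF permutes_permutation[OF ps] inc ab(2) b, folded ts_eq]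
  show "incr_cycles (lprod ts)" by (rule cut(1))
  show "orbit_of (lprod ts) a = orbit_of \<sigma> a - {a<..b}"
    and "orbit_of (lprod ts) b = orbit_of \<sigma> a \<inter> {a<..b}" by (rule cut(2), rule cut(3))
  show "y \<notin> orbit_of \<sigma> a \<Longrightarrow> orbit_of (lprod ts) y = orbit_of \<sigma> y" by (rule cut(4))
qed

definition parking :: "nat set \<Rightarrow> nat list \<Rightarrow> bool" where
  "parking C ms \<longleftrightarrow> length (filter (\<lambda>m. m \<in> C) ms) + 1 = card C \<and>
     (\<forall>t. card {y\<in>C. y \<le> t} \<le>
        length (filter (\<lambda>m. m \<in> C \<and> m \<le> t) ms) + (if Max C \<le> t then 1 else 0))"

lemma parking_singleton: "parking {x} []"
proof -
  have "{y\<in>{x}. y \<le> t} = (if x \<le> t then {x} else {})" for t by auto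
  then show ?thesis unfolding parking_def by simp
qed

lemma parking_snoc_other: "a \<notin> C \<Longrightarrow> parking C ms \<Longrightarrow> parking C (ms @ [a])"
  unfolding parking_def by simp

lemma length_filter_disj:
  assumes "\<And>m. P m \<longleftrightarrow> Q1 m \<or> Q2 m" "\<And>m. \<not> (Q1 m \<and> Q2 m)"
  shows "length (filter P xs) = length (filter Q1 xs) + length (filter Q2 xs)"
  by (induction xs) (use assms in auto)

lemma parking_merge:
  assumes fin: "finite C1" "finite C2" and dj: "C1 \<inter> C2 = {}"
    and a: "a \<in> C1" and b: "b \<in> C2" "\<forall>w\<in>C2. w \<le> b" and ab: "a < b"
    and p1: "parking C1 ms" and p2: "parking C2 ms"
  shows "parking (C1 \<union> C2) (ms @ [a])"
proof -
  have M2: "Max C2 = b" using fin b by (intro Max_eqI) auto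
  have MC: "Max (C1 \<union> C2) = max (Max C1) (Max C2)" by (rule Max_Un) (use fin a b in auto)
  have "a \<le> Max C1" using fin a by simp
  then have corr: "(if Max C1 \<le> t then 1 else 0) + (if Max C2 \<le> t then 1 else 0)
      \<le> (if a \<le> t then 1 else (0::nat)) + (if Max (C1 \<union> C2) \<le> t then 1 else 0)" for t
    using M2 MC ab by auto
  have cnt: "length (filter (\<lambda>m. m \<in> C1 \<union> C2 \<and> m \<le> t) ms) =
      length (filter (\<lambda>m. m \<in> C1 \<and> m \<le> t) ms) + length (filter (\<lambda>m. m \<in> C2 \<and> m \<le> t) ms)" for t
    by (rule length_filter_disj) (use dj in auto)
  have cnt_all: "length (filter (\<lambda>m. m \<in> C1 \<union> C2) ms) =
      length (filter (\<lambda>m. m \<in> C1) ms) + length (filter (\<lambda>m. m \<in> C2) ms)"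
    by (rule length_filter_disj) (use dj in auto)
  have card: "card {y\<in>C1 \<union> C2. y \<le> t} = card {y\<in>C1. y \<le> t} + card {y\<in>C2. y \<le> t}" for t
    using fin dj by (subst card_Un_disjoint[symmetric]) (auto intro: arg_cong[where f = card])
  show ?thesis
    unfolding parking_def
  proof (intro conjI allI)
    show "length (filter (\<lambda>m. m \<in> C1 \<union> C2) (ms @ [a])) + 1 = card (C1 \<union> C2)"
      using p1 p2 cnt_all a fin dj unfolding parking_def by (simp add: card_Un_disjoint)
    fix t
    have "card {y\<in>C1. y \<le> t} \<le> length (filter (\<lambda>m. m \<in> C1 \<and> m \<le> t) ms)
        + (if Max C1 \<le> t then 1 else 0)"
      and "card {y\<in>C2. y \<le> t} \<le> length (filter (\<lambda>m. m \<in> C2 \<and> m \<le> t) ms)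
        + (if Max C2 \<le> t then 1 else 0)"
      using p1 p2 unfolding parking_def by blast+
    moreover have "length (filter (\<lambda>m. m \<in> C1 \<union> C2 \<and> m \<le> t) (ms @ [a])) =
        length (filter (\<lambda>m. m \<in> C1 \<union> C2 \<and> m \<le> t) ms) + (if a \<le> t then 1 else 0)"
      using a by simp
    ultimately show "card {y\<in>C1 \<union> C2. y \<le> t} \<le>
        length (filter (\<lambda>m. m \<in> C1 \<union> C2 \<and> m \<le> t) (ms @ [a]))
        + (if Max (C1 \<union> C2) \<le> t then 1 else 0)"
      using cnt[of t] card[of t] corr[of t] by linarith
  qed
qed

lemma orbit_parking:
  "set ts \<subseteq> transp_set n \<Longrightarrow> incr_cycles (lprod ts) \<Longrightarrow> ncycles n (lprod ts) + length ts = n \<Longrightarrow>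
   x \<in> {1..n} \<Longrightarrow> parking (orbit_of (lprod ts) x) (map tmin ts)"
proof (induction ts arbitrary: x rule: rev_induct)
  case Nil
  have "orbit_of (lprod []) x = {x}" by (rule orbit_of_fixed) simp
  then show ?case using parking_singleton by (simp only: list.map(1))
next
  case (snoc \<tau> ts)
  then have ts: "set ts \<subseteq> transp_set n" and "\<tau> \<in> transp_set n" by auto
  from \<open>\<tau> \<in> transp_set n\<close> obtain a b where ab: "\<tau> = transpose a b" "1 \<le> a" "a < b" "b \<le> n"
    by (rule transp_setE)
  define \<sigma> where "\<sigma> = lprod ts \<circ> transpose a b"
  have \<sigma>: "lprod (ts @ [\<tau>]) = \<sigma>" unfolding \<sigma>_def ab(1) lprod_snoc ..
  have ms: "map tmin (ts @ [\<tau>]) = map tmin ts @ [a]" using ab by (simp add: tmin_transpose)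
  have inc: "incr_cycles \<sigma>" using snoc.prems(2) unfolding \<sigma> .
  have min: "ncycles n \<sigma> + (length ts + 1) = n" using snoc.prems(3) unfolding \<sigma> by simp
  note cut = minimal_last_factor[OF ts ab(2-4) \<sigma>_def inc min]
  have IH: "parking (orbit_of (lprod ts) y) (map tmin ts)" if "y \<in> {1..n}" for y
    using snoc.IH[OF ts cut(2,3) that] .
  have pp: "permutation \<sigma>" using cut(1) snoc.prems(1) \<sigma> lprod_permutes permutes_permutation by metis
  show ?case
  proof (cases "a \<in> orbit_of \<sigma> x")
    case False
    then have "x \<notin> orbit_of \<sigma> a" using orbit_of_sym[OF pp] by blast
    then show ?thesis using IH[OF snoc.prems(4)] cut(6) False unfolding \<sigma> ms
      by (simp add: parking_snoc_other)
  next
    case True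
    then have "orbit_of \<sigma> x = (orbit_of \<sigma> a - {a<..b}) \<union> (orbit_of \<sigma> a \<inter> {a<..b})"
      using orbit_of_eq[OF pp] orbit_of_sym[OF pp] by blast
    moreover have "parking (orbit_of \<sigma> a - {a<..b} \<union> orbit_of \<sigma> a \<inter> {a<..b}) (map tmin ts @ [a])"
      using cut(1) ab orbit_of_finite[OF pp] IH[of a] IH[of b] cut(4,5)
      by (intro parking_merge) auto
    ultimately show ?thesis unfolding \<sigma> ms by simp
  qed
qed

text \<open>The larger point of the last factor is determined: if two minimal factorisations of
  the same permutation with increasing cycles end with \<open>(a b)\<close> and \<open>(a b')\<close> and have the
  same smaller points, then \<open>b < b'\<close> is impossible, since the cycle \<open>C \<inter> {a<..b}\<close> would
  violate the parking condition for the second factorisation.\<close>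

lemma last_factor_le:
  assumes ts: "set ts \<subseteq> transp_set n" and us: "set us \<subseteq> transp_set n"
    and ab: "1 \<le> a" "a < b" "b \<le> n" and ab': "a < b'" "b' \<le> n"
    and \<sigma>: "\<sigma> = lprod ts \<circ> transpose a b" and \<sigma>': "\<sigma> = lprod us \<circ> transpose a b'"
    and inc: "incr_cycles \<sigma>" and min: "ncycles n \<sigma> + (length ts + 1) = n"
    and len: "length us = length ts" and ms: "map tmin ts = map tmin us"
  shows "b' \<le> b"
proof (rule ccontr)
  assume "\<not> b' \<le> b"
  define C where "C = orbit_of \<sigma> a"
  note cut = minimal_last_factor[OF ts ab \<sigma> inc min, folded C_def]
  note cut' = minimal_last_factor[OF us ab(1) ab' \<sigma>' inc min[folded len], folded C_def]
  have "parking (C \<inter> {a<..b}) (map tmin ts)"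
    using orbit_parking[OF ts cut(2,3), of b] ab cut(5) by simp
  then have P: "length (filter (\<lambda>m. m \<in> C \<inter> {a<..b}) (map tmin ts)) + 1 = card (C \<inter> {a<..b})"
    unfolding parking_def by blast
  have "parking (C \<inter> {a<..b'}) (map tmin us)"
    using orbit_parking[OF us cut'(2,3), of b'] ab' ab(1) cut'(5) by simp
  then have "card {y \<in> C \<inter> {a<..b'}. y \<le> b} \<le>
      length (filter (\<lambda>m. m \<in> C \<inter> {a<..b'} \<and> m \<le> b) (map tmin us)) +
      (if Max (C \<inter> {a<..b'}) \<le> b then 1 else 0)"
    unfolding parking_def by blast
  moreover have "Max (C \<inter> {a<..b'}) = b'"
    using cut'(1) ab' unfolding C_def by (intro Max_eqI) auto
  moreover have "{y \<in> C \<inter> {a<..b'}. y \<le> b} = C \<inter> {a<..b}"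
    and "(\<lambda>m. m \<in> C \<inter> {a<..b'} \<and> m \<le> b) = (\<lambda>m. m \<in> C \<inter> {a<..b})"
    using \<open>\<not> b' \<le> b\<close> by auto
  ultimately show False using P ms \<open>\<not> b' \<le> b\<close> by simp
qed

lemma minimal_factorisation_unique:
  "set ts \<subseteq> transp_set n \<Longrightarrow> set us \<subseteq> transp_set n \<Longrightarrow> lprod ts = lprod us \<Longrightarrow>
   incr_cycles (lprod ts) \<Longrightarrow> ncycles n (lprod ts) + length ts = n \<Longrightarrow>
   map tmin ts = map tmin us \<Longrightarrow> ts = us"
proof (induction ts arbitrary: us rule: rev_induct)
  case Nil
  then show ?case by simp
next
  case (snoc \<tau> ts)
  then obtain us' \<upsilon> where u: "us = us' @ [\<upsilon>]"
    by (metis Nil_is_map_conv rev_exhaust snoc_eq_iff_butlast)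
  have ts: "set ts \<subseteq> transp_set n" "\<tau> \<in> transp_set n"
    and us: "set us' \<subseteq> transp_set n" "\<upsilon> \<in> transp_set n"
    using snoc.prems(1,2) u by auto
  obtain a b where ab: "\<tau> = transpose a b" "1 \<le> a" "a < b" "b \<le> n"
    using ts(2) by (rule transp_setE)
  obtain a' b' where ab': "\<upsilon> = transpose a' b'" "1 \<le> a'" "a' < b'" "b' \<le> n"
    using us(2) by (rule transp_setE)
  have len: "length us' = length ts"
    using snoc.prems(6) u by (metis length_map length_append_singleton Suc_inject)
  have "map tmin ts @ [a] = map tmin us' @ [a']"
    using snoc.prems(6) u ab ab' by (simp add: tmin_transpose)
  then have ms: "map tmin ts = map tmin us'" and a': "a' = a" by auto
  define \<sigma> where "\<sigma> = lprod ts \<circ> transpose a b"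
  have \<sigma>': "\<sigma> = lprod us' \<circ> transpose a b'"
    using snoc.prems(3) unfolding \<sigma>_def u ab(1) ab'(1) a' lprod_snoc .
  have inc: "incr_cycles \<sigma>" using snoc.prems(4) unfolding \<sigma>_def ab(1) lprod_snoc .
  have min: "ncycles n \<sigma> + (length ts + 1) = n"
    using snoc.prems(5) unfolding \<sigma>_def ab(1) lprod_snoc length_append_singleton by linarith
  have "b' \<le> b"
    by (rule last_factor_le[OF ts(1) us(1) ab(2-4) ab'(3-4)[unfolded a'] \<sigma>_def \<sigma>' inc min len ms])
  moreover have "b \<le> b'"
    by (rule last_factor_le[OF us(1) ts(1) ab(2) ab'(3-4)[unfolded a'] ab(3-4) \<sigma>' \<sigma>_def inc
          min[folded len] len[symmetric] ms[symmetric]])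
  ultimately have \<upsilon>: "\<upsilon> = \<tau>" using ab ab' a' by simp
  have "lprod ts = \<sigma> \<circ> \<tau>" unfolding \<sigma>_def ab(1) by (simp add: comp_assoc)
  moreover have "lprod us' = \<sigma> \<circ> \<tau>" unfolding \<sigma>' \<upsilon>[symmetric] ab'(1) a' by (simp add: comp_assoc)
  ultimately have "lprod ts = lprod us'" by simp
  then have "ts = us'"
    using snoc.IH[OF ts(1) us(1) _ _ _ ms] minimal_last_factor(2,3)[OF ts(1) ab(2-4) \<sigma>_def inc min]
    by blast
  then show ?case using u \<upsilon> by simp
qed

lemma Sigma_nk_unique:
  assumes "1 \<le> n" and "\<gamma> \<in> Sigma_nk n k" "\<gamma>' \<in> Sigma_nk n k"
    and "lprod \<gamma> = lprod \<gamma>'" and "Pmap \<gamma> = Pmap \<gamma>'"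
  shows "\<gamma> = \<gamma>'"
  using assms Sigma_nk_facts[OF assms(2)] Sigma_nk_facts[OF assms(3)]
    Sigma_nk_incr_cycles[OF assms(1,2)]
  unfolding Pmap_def by (intro minimal_factorisation_unique) auto

section \<open>The moves \<open>\<sigma>\<^sub>l\<close>\<close>

lemma seq_act_alt: "seq_act \<pi> xs = map (\<lambda>i. xs ! (inv \<pi> (Suc i) - 1)) [0..<length xs]"
proof -
  have "[1..<length xs + 1] = map Suc [0..<length xs]" using map_Suc_upt[of 0 "length xs"] by simp
  then show ?thesis unfolding seq_act_def by simp
qed

lemma seq_act_length [simp]: "length (seq_act \<pi> xs) = length xs"
  unfolding seq_act_alt by simp

lemma seq_act_nth: "j < length xs \<Longrightarrow> seq_act \<pi> xs ! j = xs ! (inv \<pi> (Suc j) - 1)"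
  unfolding seq_act_alt by simp

lemma seq_act_id: "seq_act id xs = xs"
  by (rule nth_equalityI) (simp_all add: seq_act_nth)

lemma seq_act_comp:
  assumes p: "\<pi> permutes {1..k}" and r: "\<rho> permutes {1..k}" and len: "length xs = k"
  shows "seq_act (\<pi> \<circ> \<rho>) xs = seq_act \<pi> (seq_act \<rho> xs)"
proof (rule nth_equalityI)
  fix j assume "j < length (seq_act (\<pi> \<circ> \<rho>) xs)"
  then have j: "j < k" using len by simp
  have "inv (\<pi> \<circ> \<rho>) = inv \<rho> \<circ> inv \<pi>" using p r by (simp add: o_inv_distrib permutes_bij)
  moreover have ip: "inv \<pi> (Suc j) \<in> {1..k}" using permutes_in_image[OF permutes_inv[OF p]] j
    by simp
  ultimately show "seq_act (\<pi> \<circ> \<rho>) xs ! j = seq_act \<pi> (seq_act \<rho> xs) ! j"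
    using j len by (auto simp: seq_act_nth)
qed simp

lemma seq_act_swap:
  assumes "1 \<le> l" "l < length xs"
  shows "seq_act (transpose l (l + 1)) xs = xs[l - 1 := xs ! l, l := xs ! (l - 1)]"
  by (rule nth_equalityI) (use assms in \<open>auto simp: seq_act_nth transpose_def nth_list_update\<close>)

lemma tmin_transpose_conj:
  assumes "a < b" "c < d" "a < c"
  shows "tmin (transpose c d \<circ> transpose a b \<circ> transpose c d) = a"
proof -
  have "transpose c d a = a" "a < transpose c d b" using assms by (auto simp: transpose_def)
  then show ?thesis unfolding transpose_conj by (simp add: tmin_transpose)
qed

lemma sigma_op_replaces:
  assumes g: "set \<gamma> \<subseteq> transp_set n" and l: "1 \<le> l" "l < length \<gamma>"
  obtains u v where "sigma_op l \<gamma> = \<gamma>[l - 1 := u, l := v]"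
    "u \<in> transp_set n" "v \<in> transp_set n" "u \<circ> v = \<gamma> ! (l - 1) \<circ> \<gamma> ! l"
    "tmin u = tmin (\<gamma> ! l)" "tmin v = tmin (\<gamma> ! (l - 1))"
proof -
  define x y where "x = \<gamma> ! (l - 1)" and "y = \<gamma> ! l"
  have xT: "x \<in> transp_set n" and yT: "y \<in> transp_set n"
    unfolding x_def y_def using g l by (auto intro!: subsetD[OF g] nth_mem)
  obtain a b where x: "x = transpose a b" "a < b" using xT by (auto elim: transp_setE)
  obtain c d where y: "y = transpose c d" "c < d" using yT by (auto elim: transp_setE)
  have tm: "tmin x = a" "tmin y = c" using x y by (simp_all add: tmin_transpose)
  consider "a = c" | "a < c" | "c < a" by linarith
  then show ?thesis
  proof cases
    case 1
    have "sigma_op l \<gamma> = \<gamma>[l - 1 := x, l := y]" using 1 tm l unfolding sigma_op_def x_def y_def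
      by simp
    then show ?thesis using that[of x y] xT yT 1 tm unfolding x_def y_def by simp
  next
    case 2
    have "sigma_op l \<gamma> = \<gamma>[l - 1 := y, l := y \<circ> x \<circ> y]"
      using 2 tm transp_inv[OF yT] unfolding sigma_op_def beta_def x_def y_def by simp
    moreover have "y \<circ> (y \<circ> x \<circ> y) = x \<circ> y"
      by (simp only: comp_assoc[symmetric] transp_invol[OF yT] id_comp)
    moreover have "tmin (y \<circ> x \<circ> y) = a" unfolding x y using x y 2 by (intro tmin_transpose_conj)
    ultimately show ?thesis using that[of y "y \<circ> x \<circ> y"] xT yT transp_conj tm unfolding x_def y_def
      by simp
  next
    case 3
    have "sigma_op l \<gamma> = \<gamma>[l - 1 := x \<circ> y \<circ> x, l := x]"
      using 3 tm transp_inv[OF xT] unfolding sigma_op_def beta_inv_def x_def y_def by simp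
    moreover have "(x \<circ> y \<circ> x) \<circ> x = x \<circ> y"
      by (simp only: comp_assoc transp_invol[OF xT] comp_id)
    moreover have "tmin (x \<circ> y \<circ> x) = c" unfolding x y using x y 3 by (intro tmin_transpose_conj)
    ultimately show ?thesis using that[of "x \<circ> y \<circ> x" x] xT yT transp_conj tm unfolding x_def y_def
      by simp
  qed
qed

lemma sigma_op_props:
  assumes g: "\<gamma> \<in> Sigma_nk n k" and l: "1 \<le> l" "l < k"
  shows "sigma_op l \<gamma> \<in> Sigma_nk n k" "lprod (sigma_op l \<gamma>) = lprod \<gamma>"
    "Pmap (sigma_op l \<gamma>) = seq_act (transpose l (l + 1)) (Pmap \<gamma>)"
proof -
  note \<gamma> = Sigma_nk_facts[OF g]
  obtain u v where uv: "sigma_op l \<gamma> = \<gamma>[l - 1 := u, l := v]"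
    "u \<in> transp_set n" "v \<in> transp_set n" "u \<circ> v = \<gamma> ! (l - 1) \<circ> \<gamma> ! l"
    "tmin u = tmin (\<gamma> ! l)" "tmin v = tmin (\<gamma> ! (l - 1))"
    using sigma_op_replaces[OF \<gamma>(1) l(1)] l(2) \<gamma>(2) by metis
  have Suc: "Suc (l - 1) = l" using l by simp
  show prod: "lprod (sigma_op l \<gamma>) = lprod \<gamma>"
    unfolding uv(1) using lprod_update_adjacent[of "l - 1" \<gamma> u v] uv(4) l \<gamma>(2) by (simp add: Suc)
  have "set (sigma_op l \<gamma>) \<subseteq> transp_set n"
    unfolding uv(1) using \<gamma>(1) uv(2,3) by (meson insert_subset order_trans set_update_subset_insert)
  then show "sigma_op l \<gamma> \<in> Sigma_nk n k" using g prod uv(1) unfolding Sigma_nk_def by simp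
  show "Pmap (sigma_op l \<gamma>) = seq_act (transpose l (l + 1)) (Pmap \<gamma>)"
    unfolding uv(1) Pmap_def using seq_act_swap[of l "map tmin \<gamma>"] l \<gamma>(2) uv(5,6)
    by (simp add: map_update)
qed

section \<open>The action of the symmetric group\<close>

lemma adjacent_word_preserves:
  fixes k :: nat
  assumes step: "\<And>\<pi> l. \<pi> permutes {1..k} \<Longrightarrow> P \<pi> \<Longrightarrow> 1 \<le> l \<Longrightarrow> l < k \<Longrightarrow>
      P (transpose l (l + 1) \<circ> \<pi>)"
    and \<rho>: "\<rho> permutes {1..k}" "P \<rho>" and xs: "set xs \<subseteq> {1..<k}"
  shows "(apply_adj_transps xs \<circ> \<rho>) permutes {1..k} \<and> P (apply_adj_transps xs \<circ> \<rho>)"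
  using xs
proof (induction xs)
  case Nil
  then show ?case using \<rho> by simp
next
  case (Cons x xs)
  then have x: "1 \<le> x" "x < k" and "set xs \<subseteq> {1..<k}" by auto
  then have IH: "(apply_adj_transps xs \<circ> \<rho>) permutes {1..k}" "P (apply_adj_transps xs \<circ> \<rho>)"
    using Cons.IH by blast+
  have "(transpose x (x + 1) \<circ> (apply_adj_transps xs \<circ> \<rho>)) permutes {1..k}"
    using x by (intro permutes_compose[OF IH(1) permutes_swap_id]) auto
  moreover have "P (transpose x (x + 1) \<circ> (apply_adj_transps xs \<circ> \<rho>))"
    by (rule step[OF IH x])
  ultimately show ?case by (simp only: apply_adj_transps_Cons comp_assoc)
qed

lemma adjacent_transpositions_induct [consumes 1, case_names id step]:
  fixes k :: nat
  assumes p: "\<pi> permutes {1..k}" and base: "P id"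
    and step: "\<And>\<pi> l. \<pi> permutes {1..k} \<Longrightarrow> P \<pi> \<Longrightarrow> 1 \<le> l \<Longrightarrow> l < k \<Longrightarrow>
      P (transpose l (l + 1) \<circ> \<pi>)"
  shows "P \<pi>"
proof -
  have transp: "P (transpose a b \<circ> \<rho>)"
    if "\<rho> permutes {1..k}" "P \<rho>" "a \<in> {1..k}" "b \<in> {1..k}" "a < b" for a b \<rho>
  proof -
    have "set (adj_transp_seq a b) \<subseteq> {1..<k}" using that(3-5) by (auto simp: set_adj_transp_seq)
    from adjacent_word_preserves[OF step that(1,2) this]
    show ?thesis unfolding adj_transp_seq_correct[OF that(5)] by blast
  qed
  show ?thesis
    using p finite_atLeastAtMost
  proof (induction rule: permutes_induct)
    case (swap a b \<rho>)
    show ?case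
    proof (cases "a < b")
      case True
      show ?thesis by (rule transp) (use swap True in auto)
    next
      case False
      have "P (transpose b a \<circ> \<rho>)" by (rule transp) (use swap False in auto)
      then show ?thesis by (simp only: transpose_commute)
    qed
  qed (rule base)
qed

lemma is_ext_actionD:
  assumes "is_ext_action n k act"
  shows "\<pi> permutes {1..k} \<Longrightarrow> \<gamma> \<in> Sigma_nk n k \<Longrightarrow> act \<pi> \<gamma> \<in> Sigma_nk n k"
    and "\<gamma> \<in> Sigma_nk n k \<Longrightarrow> act id \<gamma> = \<gamma>"
    and "\<pi> permutes {1..k} \<Longrightarrow> \<rho> permutes {1..k} \<Longrightarrow> \<gamma> \<in> Sigma_nk n k \<Longrightarrow>
      act (\<pi> \<circ> \<rho>) \<gamma> = act \<pi> (act \<rho> \<gamma>)"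
    and "1 \<le> l \<Longrightarrow> l < k \<Longrightarrow> \<gamma> \<in> Sigma_nk n k \<Longrightarrow>
      act (transpose l (l + 1)) \<gamma> = sigma_op l \<gamma>"
  using assms unfolding is_ext_action_def by blast+

text \<open>Uniqueness of the extension: two actions of \<open>S\<^sub>k\<close> on \<open>\<Sigma>\<^sub>n(k)\<close> extending the moves
  \<open>\<sigma>\<^sub>l\<close> agree, since the adjacent transpositions generate \<open>S\<^sub>k\<close>.\<close>

lemma ext_action_unique:
  assumes act: "is_ext_action n k act" and act': "is_ext_action n k act'"
    and p: "\<pi> permutes {1..k}" and g: "\<gamma> \<in> Sigma_nk n k"
  shows "act' \<pi> \<gamma> = act \<pi> \<gamma>"
proof -
  have "\<forall>\<gamma>\<in>Sigma_nk n k. act' \<pi> \<gamma> = act \<pi> \<gamma>"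
    using p
  proof (induction rule: adjacent_transpositions_induct)
    case id
    then show ?case using is_ext_actionD(2)[OF act] is_ext_actionD(2)[OF act'] by metis
  next
    case (step \<pi> l)
    have s: "transpose l (l + 1) permutes {1..k}" using step by (intro permutes_swap_id) auto
    show ?case
    proof
      fix \<gamma> assume g: "\<gamma> \<in> Sigma_nk n k"
      have "act' (transpose l (l + 1) \<circ> \<pi>) \<gamma> = sigma_op l (act' \<pi> \<gamma>)"
        using is_ext_actionD[OF act'] s \<open>\<pi> permutes {1..k}\<close> \<open>1 \<le> l\<close> \<open>l < k\<close> g by simp
      also have "\<dots> = sigma_op l (act \<pi> \<gamma>)" using step.IH g by simp
      also have "\<dots> = act (transpose l (l + 1) \<circ> \<pi>) \<gamma>"
        using is_ext_actionD[OF act] s \<open>\<pi> permutes {1..k}\<close> \<open>1 \<le> l\<close> \<open>l < k\<close> g by simp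
      finally show "act' (transpose l (l + 1) \<circ> \<pi>) \<gamma> = act (transpose l (l + 1) \<circ> \<pi>) \<gamma>" .
    qed
  qed
  then show ?thesis using g by blast
qed

text \<open>By rigidity there is at most one.\<close>

definition image_spec ::
  "nat \<Rightarrow> nat \<Rightarrow> (nat \<Rightarrow> nat) \<Rightarrow> (nat \<Rightarrow> nat) list \<Rightarrow> (nat \<Rightarrow> nat) list \<Rightarrow> bool" where
  "image_spec n k \<pi> \<gamma> \<gamma>' \<longleftrightarrow>
     \<gamma>' \<in> Sigma_nk n k \<and> lprod \<gamma>' = lprod \<gamma> \<and> Pmap \<gamma>' = seq_act \<pi> (Pmap \<gamma>)"

definition hurwitz_action :: "nat \<Rightarrow> nat \<Rightarrow> (nat \<Rightarrow> nat) \<Rightarrow> (nat \<Rightarrow> nat) list \<Rightarrow> (nat \<Rightarrow> nat) list" where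
  "hurwitz_action n k \<pi> \<gamma> = (THE \<gamma>'. image_spec n k \<pi> \<gamma> \<gamma>')"

lemma image_spec_comp:
  assumes "\<pi> permutes {1..k}" "\<rho> permutes {1..k}" "\<gamma> \<in> Sigma_nk n k"
    and "image_spec n k \<rho> \<gamma> \<gamma>1" "image_spec n k \<pi> \<gamma>1 \<gamma>2"
  shows "image_spec n k (\<pi> \<circ> \<rho>) \<gamma> \<gamma>2"
  using assms seq_act_comp[OF assms(1,2), of "Pmap \<gamma>"] Sigma_nk_facts(2)[OF assms(3)]
  unfolding image_spec_def Pmap_def by simp

lemma image_spec_sigma_op:
  "\<gamma> \<in> Sigma_nk n k \<Longrightarrow> 1 \<le> l \<Longrightarrow> l < k \<Longrightarrow> image_spec n k (transpose l (l + 1)) \<gamma> (sigma_op l \<gamma>)"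
  using sigma_op_props unfolding image_spec_def by blast

text \<open>Existence: compose the moves \<open>\<sigma>\<^sub>l\<close> along a word in adjacent transpositions.\<close>

lemma image_spec_exists:
  assumes "\<pi> permutes {1..k}" "\<gamma> \<in> Sigma_nk n k"
  shows "\<exists>\<gamma>'. image_spec n k \<pi> \<gamma> \<gamma>'"
  using assms
proof (induction arbitrary: \<gamma> rule: adjacent_transpositions_induct)
  case id
  then show ?case unfolding image_spec_def by (auto simp: seq_act_id)
next
  case (step \<pi> l)
  then obtain \<gamma>' where \<gamma>': "image_spec n k \<pi> \<gamma> \<gamma>'" by blast
  then have "\<gamma>' \<in> Sigma_nk n k" unfolding image_spec_def by blast
  then have "image_spec n k (transpose l (l + 1)) \<gamma>' (sigma_op l \<gamma>')"
    using \<open>1 \<le> l\<close> \<open>l < k\<close> by (rule image_spec_sigma_op)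
  then have "image_spec n k (transpose l (l + 1) \<circ> \<pi>) \<gamma> (sigma_op l \<gamma>')"
    using step \<gamma>' by (intro image_spec_comp[of _ k \<pi>] permutes_swap_id) auto
  then show ?case by blast
qed

lemma image_spec_unique:
  "1 \<le> n \<Longrightarrow> image_spec n k \<pi> \<gamma> \<gamma>1 \<Longrightarrow> image_spec n k \<pi> \<gamma> \<gamma>2 \<Longrightarrow> \<gamma>1 = \<gamma>2"
  unfolding image_spec_def by (auto intro: Sigma_nk_unique)

lemma hurwitz_action_eqI:
  assumes "1 \<le> n" "\<pi> permutes {1..k}" "\<gamma> \<in> Sigma_nk n k" "image_spec n k \<pi> \<gamma> \<gamma>'"
  shows "hurwitz_action n k \<pi> \<gamma> = \<gamma>'"
  unfolding hurwitz_action_def using assms image_spec_unique[OF assms(1)] by blast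

lemma hurwitz_action_spec:
  assumes "1 \<le> n" "\<pi> permutes {1..k}" "\<gamma> \<in> Sigma_nk n k"
  shows "image_spec n k \<pi> \<gamma> (hurwitz_action n k \<pi> \<gamma>)"
  using image_spec_exists[OF assms(2,3)] hurwitz_action_eqI[OF assms] by metis

lemma hurwitz_action_is_ext_action:
  assumes n: "1 \<le> n"
  shows "is_ext_action n k (hurwitz_action n k)"
proof -
  note spec = hurwitz_action_spec[OF n] and eqI = hurwitz_action_eqI[OF n]
  have closed: "hurwitz_action n k \<pi> \<gamma> \<in> Sigma_nk n k"
    if "\<pi> permutes {1..k}" "\<gamma> \<in> Sigma_nk n k" for \<pi> \<gamma>
    using spec[OF that] unfolding image_spec_def by blast
  have ident: "hurwitz_action n k id \<gamma> = \<gamma>" if "\<gamma> \<in> Sigma_nk n k" for \<gamma>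
    using that by (intro eqI permutes_id) (simp_all add: image_spec_def seq_act_id)
  have comp: "hurwitz_action n k (\<pi> \<circ> \<rho>) \<gamma> = hurwitz_action n k \<pi> (hurwitz_action n k \<rho> \<gamma>)"
    if "\<pi> permutes {1..k}" "\<rho> permutes {1..k}" "\<gamma> \<in> Sigma_nk n k" for \<pi> \<rho> \<gamma>
    using that spec closed by (intro eqI image_spec_comp[of _ k \<rho>] permutes_compose) auto
  have moves: "hurwitz_action n k (transpose l (l + 1)) \<gamma> = sigma_op l \<gamma>"
    if "1 \<le> l" "l < k" "\<gamma> \<in> Sigma_nk n k" for l \<gamma>
    using that image_spec_sigma_op by (intro eqI permutes_swap_id) auto
  show ?thesis unfolding is_ext_action_def using closed ident comp moves by blast
qed

text \<open>Equivariance of \<open>P\<close>, and stabilisers: \<open>\<pi>\<close> fixes \<open>\<gamma>\<close> iff \<open>\<gamma>\<close> itself satisfies the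
  specification of \<open>\<pi> \<cdot> \<gamma>\<close>, i.e. iff \<open>\<pi>\<close> fixes \<open>P(\<gamma>)\<close>.\<close>

lemma hurwitz_action_Pmap:
  "1 \<le> n \<Longrightarrow> \<pi> permutes {1..k} \<Longrightarrow> \<gamma> \<in> Sigma_nk n k \<Longrightarrow>
   Pmap (hurwitz_action n k \<pi> \<gamma>) = seq_act \<pi> (Pmap \<gamma>)"
  using hurwitz_action_spec unfolding image_spec_def by blast

lemma hurwitz_action_fixes_iff:
  assumes "1 \<le> n" "\<pi> permutes {1..k}" "\<gamma> \<in> Sigma_nk n k"
  shows "seq_act \<pi> (Pmap \<gamma>) = Pmap \<gamma> \<longleftrightarrow> hurwitz_action n k \<pi> \<gamma> = \<gamma>"
proof
  assume "seq_act \<pi> (Pmap \<gamma>) = Pmap \<gamma>"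
  then show "hurwitz_action n k \<pi> \<gamma> = \<gamma>"
    using assms by (intro hurwitz_action_eqI) (auto simp: image_spec_def)
qed (use hurwitz_action_Pmap[OF assms] in simp)

theorem proposition4p2:
  fixes n k :: nat
  assumes "1 \<le> n" and "1 \<le> k"
  shows "\<exists>act. is_ext_action n k act \<and>
     (\<forall>act'. is_ext_action n k act' \<longrightarrow>
        (\<forall>\<pi> \<gamma>. \<pi> permutes {1..k} \<and> \<gamma> \<in> Sigma_nk n k \<longrightarrow> act' \<pi> \<gamma> = act \<pi> \<gamma>)) \<and>
     (\<forall>\<pi> \<gamma>. \<pi> permutes {1..k} \<and> \<gamma> \<in> Sigma_nk n k \<longrightarrow>
        Pmap (act \<pi> \<gamma>) = seq_act \<pi> (Pmap \<gamma>)) \<and>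
     (\<forall>\<pi> \<gamma>. \<pi> permutes {1..k} \<and> \<gamma> \<in> Sigma_nk n k \<longrightarrow>
        (seq_act \<pi> (Pmap \<gamma>) = Pmap \<gamma> \<longleftrightarrow> act \<pi> \<gamma> = \<gamma>))"
proof (intro exI[of _ "hurwitz_action n k"] conjI allI impI)
  show act: "is_ext_action n k (hurwitz_action n k)"
    by (rule hurwitz_action_is_ext_action[OF assms(1)])
  fix \<pi> \<gamma> assume "\<pi> permutes {1..k} \<and> \<gamma> \<in> Sigma_nk n k"
  then show "Pmap (hurwitz_action n k \<pi> \<gamma>) = seq_act \<pi> (Pmap \<gamma>)"
    and "seq_act \<pi> (Pmap \<gamma>) = Pmap \<gamma> \<longleftrightarrow> hurwitz_action n k \<pi> \<gamma> = \<gamma>"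
    using hurwitz_action_Pmap hurwitz_action_fixes_iff assms(1) by blast+
  fix act' assume "is_ext_action n k act'"
  then show "act' \<pi> \<gamma> = hurwitz_action n k \<pi> \<gamma>"
    using ext_action_unique[OF act] \<open>\<pi> permutes {1..k} \<and> \<gamma> \<in> Sigma_nk n k\<close> by blast
qed

end
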